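(* Let $G=(V,E)$ be a finite connected graph with nodes $V=\{v_1,\dots,v_n\}$, let $S=\{v_1,\dots,v_\sigma\}$ with $\sigma\ge1$ be the set of sources, and assume the non-sources are ordered so that $\deg_G(v_{\sigma+1})\ge\deg_G(v_{\sigma+2})\ge\cdots\ge\deg_G(v_n)$. Fix $t\in\mathbb{Z}_{\ge 0}$. Consider all tuples $(V_0,\dots,V_t,\pi)$ with $V_0\subseteq V_1\subseteq\cdots\subseteq V_t\subseteq V$ and $\pi:V\setminus S\to V$ satisfying: $V_0=S$; for all $k=1,\dots,t$ and all $v\in V_k\setminus S$, $\pi(v)\in V_{k-1}$; for all $k=1,\dots,t$ and all $u,v\in V_k\setminus V_{k-1}$, $\pi(u)=\pi(v)$ only if $u=v$; and for all $v\in V$, $|\pi^{-1}(v)|\le \deg_G(v)-\delta_{v\in V\setminus S}$ (here $\pi$ need not map along edges of $G$). Then the maximum of $|V_t|$ over all such tuples is attained by a tuple satisfying, for every $k=1,\dots,t$, $$\min\{i: v_i\in V_k\setminus V_{k-1}\}>\max\{i: v_i\in V_{k-1}\}.$$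
   Context: $\deg_G(v)$ is the degree of $v$ in $G$; $\delta_p=1$ if proposition $p$ is true and $0$ otherwise; $\pi^{-1}(v)=\{u\in V\setminus S:\pi(u)=v\}$. The minimum over an empty set is taken to be $+\infty$. *)

theory Defs
  imports Main
begin

text \<open>Finite simple graph on vertex set {1..n} (vertex v_i is the number i),
  given by an edge predicate E.\<close>

definition simple_graph :: "nat \<Rightarrow> (nat \<Rightarrow> nat \<Rightarrow> bool) \<Rightarrow> bool" where
  "simple_graph n E \<longleftrightarrow>
     (\<forall>u v. E u v \<longrightarrow> u \<in> {1..n} \<and> v \<in> {1..n}) \<and>
     (\<forall>u v. E u v \<longrightarrow> E v u) \<and>
     (\<forall>v. \<not> E v v)"

definition connected_graph :: "nat \<Rightarrow> (nat \<Rightarrow> nat \<Rightarrow> bool) \<Rightarrow> bool" where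
  "connected_graph n E \<longleftrightarrow> (\<forall>u\<in>{1..n}. \<forall>v\<in>{1..n}. E\<^sup>*\<^sup>* u v)"

definition deg :: "(nat \<Rightarrow> nat \<Rightarrow> bool) \<Rightarrow> nat \<Rightarrow> nat" where
  "deg E v = card {u. E v u}"

definition valid_tuple ::
  "nat \<Rightarrow> (nat \<Rightarrow> nat \<Rightarrow> bool) \<Rightarrow> nat \<Rightarrow> nat \<Rightarrow> (nat \<Rightarrow> nat set) \<Rightarrow> (nat \<Rightarrow> nat) \<Rightarrow> bool" where
  "valid_tuple n E \<sigma> t Vs \<pi> \<longleftrightarrow>
     (let V = {1..n}; S = {1..\<sigma>} in
       Vs 0 = S \<and>
       (\<forall>k<t. Vs k \<subseteq> Vs (Suc k)) \<and>
       Vs t \<subseteq> V \<and>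
       (\<forall>v\<in>V - S. \<pi> v \<in> V) \<and>
       (\<forall>k\<in>{1..t}. \<forall>v\<in>Vs k - S. \<pi> v \<in> Vs (k - 1)) \<and>
       (\<forall>k\<in>{1..t}. \<forall>u\<in>Vs k - Vs (k - 1). \<forall>v\<in>Vs k - Vs (k - 1).
           \<pi> u = \<pi> v \<longrightarrow> u = v) \<and>
       (\<forall>v\<in>V. card {u\<in>V - S. \<pi> u = v} + (if v \<in> V - S then 1 else 0) \<le> deg E v))"

end

theory Submission
  imports Defs "HOL-Combinatorics.Permutations"
begin

(* Among the tuples maximising |V_t| take one minimising the sum of the indices of all members
   of V_0, ..., V_t. Suppose v_u enters at layer k although v_j with j > u already lies in
   V_(k-1). Both are non-sources, so deg v_j <= deg v_u. Exchanging the names u and j keeps every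
   condition except possibly the degree bound at v_j, which now carries the children of v_u.
   The surplus children of v_j are handed over to v_u, which lies in every layer that contains
   v_j; they are chosen outside the layers in which v_u already has a child, so that the parent
   map stays injective on each layer. As each layer contains at most one child of v_j, only
   |children of v_u| <= deg v_j - 1 candidates are lost, which leaves enough. The new tuple has
   the same |V_t| and a smaller index sum.
   A valid tuple exists: all V_k = S, with pi a breadth-first parent map. *)

definition children :: "'a set \<Rightarrow> 'a set \<Rightarrow> ('a \<Rightarrow> 'a) \<Rightarrow> 'a \<Rightarrow> 'a set" where
  "children V S \<pi> v = {u \<in> V - S. \<pi> u = v}"

definition valid_layering :: "'a set \<Rightarrow> 'a set \<Rightarrow> nat \<Rightarrow> (nat \<Rightarrow> 'a set) \<Rightarrow> ('a \<Rightarrow> 'a) \<Rightarrow> bool" where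
  "valid_layering V S t Vs \<pi> \<longleftrightarrow>
     Vs 0 = S \<and>
     (\<forall>k<t. Vs k \<subseteq> Vs (Suc k)) \<and>
     Vs t \<subseteq> V \<and>
     (\<forall>v\<in>V - S. \<pi> v \<in> V) \<and>
     (\<forall>k\<in>{1..t}. \<forall>v\<in>Vs k - S. \<pi> v \<in> Vs (k - 1)) \<and>
     (\<forall>k\<in>{1..t}. \<forall>u\<in>Vs k - Vs (k - 1). \<forall>v\<in>Vs k - Vs (k - 1). \<pi> u = \<pi> v \<longrightarrow> u = v)"

definition within_capacity :: "('a \<Rightarrow> nat) \<Rightarrow> 'a set \<Rightarrow> 'a set \<Rightarrow> ('a \<Rightarrow> 'a) \<Rightarrow> bool" where
  "within_capacity c V S \<pi> \<longleftrightarrow>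
     (\<forall>v\<in>V. card (children V S \<pi> v) + (if v \<in> V - S then 1 else 0) \<le> c v)"

lemma valid_tuple_iff:
  "valid_tuple n E \<sigma> t Vs \<pi> \<longleftrightarrow>
     valid_layering {1..n} {1..\<sigma>} t Vs \<pi> \<and> within_capacity (deg E) {1..n} {1..\<sigma>} \<pi>"
  unfolding valid_tuple_def valid_layering_def within_capacity_def children_def Let_def
  by blast

lemma chain_subset:
  assumes "\<forall>k<t. Vs k \<subseteq> Vs (Suc k)" and "a \<le> b" and "b \<le> t"
  shows "Vs a \<subseteq> Vs b"
  using assms(2,3)
proof (induction b)
  case (Suc b)
  then show ?case
    using assms(1) by (metis Suc_le_eq le_Suc_eq order.refl order_trans less_imp_le_nat)
qed simp

lemma entry_layer_unique:
  assumes "\<forall>k<t. Vs k \<subseteq> Vs (Suc k)" and "m \<in> {1..t}" and "m' \<in> {1..t}"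
    and "x \<in> Vs m - Vs (m - 1)" and "x \<in> Vs m' - Vs (m' - 1)"
  shows "m = m'"
proof (rule ccontr)
  have early_in_later: False if "l < l'" "l' \<in> {1..t}" "x \<in> Vs l" "x \<notin> Vs (l' - 1)" for l l'
  proof -
    have "Vs l \<subseteq> Vs (l' - 1)" using that by (intro chain_subset[OF assms(1)]) auto
    then show False using that by blast
  qed
  assume "m \<noteq> m'"
  then show False
    using early_in_later[of m m'] early_in_later[of m' m] assms(2-5) by (cases "m < m'") auto
qed

lemma card_sharing_label_le:
  assumes "finite Y"
    and label_unique: "\<And>x l l'. lab x l \<Longrightarrow> lab x l' \<Longrightarrow> l = l'"
    and labels_distinct: "\<And>a b l. a \<in> X \<Longrightarrow> b \<in> X \<Longrightarrow> lab a l \<Longrightarrow> lab b l \<Longrightarrow> a = b"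
  shows "card {x \<in> X. \<exists>y\<in>Y. \<exists>l. lab x l \<and> lab y l} \<le> card Y"
proof -
  define B where "B = {x \<in> X. \<exists>y\<in>Y. \<exists>l. lab x l \<and> lab y l}"
  define g where "g x = (SOME y. y \<in> Y \<and> (\<exists>l. lab x l \<and> lab y l))" for x
  have g: "g x \<in> Y \<and> (\<exists>l. lab x l \<and> lab (g x) l)" if "x \<in> B" for x
    unfolding g_def by (rule someI_ex) (use that B_def in blast)
  have "inj_on g B"
  proof (rule inj_onI)
    fix a b assume "a \<in> B" "b \<in> B" "g a = g b"
    with g[of a] g[of b] obtain l where "lab a l" "lab b l"
      using label_unique by metis
    then show "a = b" using labels_distinct \<open>a \<in> B\<close> \<open>b \<in> B\<close> B_def by blast
  qed
  moreover have "g ` B \<subseteq> Y" using g by blast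
  ultimately show ?thesis
    using card_inj_on_le assms(1) unfolding B_def by blast
qed

lemma sum_transpose_image_le:
  fixes u j :: nat
  assumes "finite A" and "u < j" and "u \<in> A \<longrightarrow> j \<in> A"
  shows "\<Sum>(transpose u j ` A) \<le> \<Sum>A"
proof (cases "u \<in> A")
  case False
  have "\<Sum>(transpose u j ` A) = (\<Sum>x\<in>A. transpose u j x)"
    by (simp add: sum.reindex)
  also have "\<dots> \<le> \<Sum>A"
    using False assms(2) by (intro sum_mono) (auto simp: transpose_def)
  finally show ?thesis .
qed (use assms in simp)

lemma sum_transpose_image_less:
  fixes u j :: nat
  assumes "finite A" and "u < j" and "j \<in> A" and "u \<notin> A"
  shows "\<Sum>(transpose u j ` A) < \<Sum>A"
proof -
  have "\<Sum>(transpose u j ` A) = (\<Sum>x\<in>A. transpose u j x)"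
    by (simp add: sum.reindex)
  also have "\<dots> < \<Sum>A"
    using assms by (intro sum_strict_mono_ex1) (auto simp: transpose_def)
  finally show ?thesis .
qed

lemma reachable_parent_exists:
  assumes "\<And>v. v \<in> A \<Longrightarrow> E\<^sup>*\<^sup>* r v"
  obtains par :: "'a \<Rightarrow> 'a" and rk :: "'a \<Rightarrow> nat"
  where "\<And>v. v \<in> A \<Longrightarrow> v \<noteq> r \<Longrightarrow> E (par v) v \<and> rk (par v) < rk v"
proof -
  define rk where "rk v = (LEAST m. (E ^^ m) r v)" for v
  have path_rk: "(E ^^ rk v) r v" if "v \<in> A" for v
  proof -
    have "\<exists>m. (E ^^ m) r v" using assms[OF that] by (simp add: rtranclp_power)
    then show ?thesis unfolding rk_def by (rule LeastI_ex)
  qed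
  have rk_le: "rk v \<le> m" if "(E ^^ m) r v" for v m
    unfolding rk_def using that by (rule Least_le)
  have parent: "\<exists>w. E w v \<and> rk w < rk v" if "v \<in> A" and "v \<noteq> r" for v
  proof -
    obtain m where m: "rk v = Suc m"
      using path_rk[OF \<open>v \<in> A\<close>] \<open>v \<noteq> r\<close> by (cases "rk v") auto
    then obtain w where "(E ^^ m) r w" and "E w v"
      using path_rk[OF \<open>v \<in> A\<close>] by (metis relpowp_Suc_E)
    then show ?thesis using rk_le[of m w] m by (intro exI[of _ w]) auto
  qed
  show ?thesis
    by (rule that[of "\<lambda>v. SOME w. E w v \<and> rk w < rk v" rk]) (use someI_ex[OF parent] in blast)
qed

lemma within_capacity_parent_map:
  fixes rk :: "nat \<Rightarrow> 'b::order"
  assumes sym: "\<And>u v. E u v \<Longrightarrow> E v u" and finite_nbrs: "\<And>x. finite {w. E x w}"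
    and par: "\<And>v. v \<in> V - S \<Longrightarrow> E (par v) v \<and> rk (par v) < rk v"
  shows "within_capacity (deg E) V S par"
  unfolding within_capacity_def
proof
  fix x assume "x \<in> V"
  have sub_nbrs: "children V S par x \<subseteq> {w. E x w}"
    unfolding children_def using par by blast
  show "card (children V S par x) + (if x \<in> V - S then 1 else 0) \<le> deg E x"
  proof (cases "x \<in> V - S")
    case True
    have "E x (par x)" using par[OF True] sym by blast
    moreover have "par x \<notin> children V S par x"
      using par[OF True] par[of "par x"] unfolding children_def by auto
    ultimately have "card (children V S par x) < deg E x"
      unfolding deg_def using sub_nbrs finite_nbrs by (intro psubset_card_mono) auto
    then show ?thesis using True by simp
  next
    case False
    have "card (children V S par x) \<le> deg E x"
      unfolding deg_def using sub_nbrs finite_nbrs by (intro card_mono)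
    then show ?thesis unfolding if_not_P[OF False] by simp
  qed
qed

lemma valid_tuple_exists:
  assumes graph: "simple_graph n E" and conn: "connected_graph n E"
    and "1 \<le> \<sigma>" and "\<sigma> \<le> n"
  shows "\<exists>Vs \<pi>. valid_tuple n E \<sigma> t Vs \<pi>"
proof -
  define V S where "V = {1..n}" and "S = {1..\<sigma>}"
  have edge_in: "u \<in> V \<and> v \<in> V" and edge_sym: "E v u" if "E u v" for u v
    using graph that unfolding simple_graph_def V_def by blast+
  have reach: "E\<^sup>*\<^sup>* 1 v" if "v \<in> V" for v
    using conn that assms(3,4) unfolding connected_graph_def V_def by simp
  obtain par and rk :: "nat \<Rightarrow> nat" where par: "\<And>v. v \<in> V \<Longrightarrow> v \<noteq> 1 \<Longrightarrow> E (par v) v \<and> rk (par v) < rk v"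
    using reachable_parent_exists[of V E 1] reach by blast
  have "1 \<in> S" using \<open>1 \<le> \<sigma>\<close> S_def by simp
  then have par_nonsrc: "E (par v) v \<and> rk (par v) < rk v" if "v \<in> V - S" for v
    using par that by blast
  have "finite {w. E x w}" for x
    by (rule finite_subset[of _ V]) (auto dest: edge_in simp: V_def)
  then have "within_capacity (deg E) V S par"
    using within_capacity_parent_map[of E V S par rk] edge_sym par_nonsrc by blast
  moreover have "valid_layering V S t (\<lambda>_. S) par"
  proof -
    have "S \<subseteq> V" using \<open>\<sigma> \<le> n\<close> unfolding S_def V_def by auto
    moreover have "par v \<in> V" if "v \<in> V - S" for v
      using par_nonsrc[OF that] edge_in by blast
    ultimately show ?thesis unfolding valid_layering_def by auto
  qed
  ultimately show ?thesis unfolding valid_tuple_iff V_def S_def by blast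
qed

lemma permutes_image_mem_iff:
  assumes "p permutes A"
  shows "x \<in> p ` B \<longleftrightarrow> inv p x \<in> B"
  using inj_image_mem_iff[OF permutes_inj[OF assms], of "inv p x" B]
  by (simp add: permutes_inverses(1)[OF assms])

lemma valid_layering_permute:
  assumes lay: "valid_layering V S t Vs \<pi>" and perm: "p permutes V - S"
  shows "valid_layering V S t (\<lambda>i. p ` Vs i) (p \<circ> \<pi> \<circ> inv p)"
proof -
  have V0: "Vs 0 = S" and chain: "\<forall>k<t. Vs k \<subseteq> Vs (Suc k)" and Vt: "Vs t \<subseteq> V"
    and \<pi>_into_V: "\<forall>v\<in>V - S. \<pi> v \<in> V"
    and \<pi>_layer: "\<forall>k\<in>{1..t}. \<forall>v\<in>Vs k - S. \<pi> v \<in> Vs (k - 1)"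
    and \<pi>_inj: "\<forall>k\<in>{1..t}. \<forall>a\<in>Vs k - Vs (k - 1). \<forall>b\<in>Vs k - Vs (k - 1). \<pi> a = \<pi> b \<longrightarrow> a = b"
    using lay unfolding valid_layering_def by blast+
  have in_V: "p x \<in> V \<longleftrightarrow> x \<in> V" and in_S: "p x \<in> S \<longleftrightarrow> x \<in> S" for x
    using permutes_in_image[OF perm, of x] permutes_not_in[OF perm, of x]
    by (cases "x \<in> V - S"; (blast | simp))+
  note mem_image = permutes_image_mem_iff[OF perm]
  show ?thesis
    unfolding valid_layering_def
  proof (intro conjI ballI allI impI)
    show "p ` Vs 0 = S" using V0 permutes_not_in[OF perm] by (simp add: image_cong)
    show "p ` Vs k \<subseteq> p ` Vs (Suc k)" if "k < t" for k
      using chain that by blast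
    show "p ` Vs t \<subseteq> V" using Vt in_V by blast
  next
    fix v assume "v \<in> V - S"
    then show "(p \<circ> \<pi> \<circ> inv p) v \<in> V"
      using \<pi>_into_V in_V permutes_in_image[OF permutes_inv[OF perm]] by auto
  next
    fix k v assume "k \<in> {1..t}" and v: "v \<in> p ` Vs k - S"
    have "inv p v \<in> Vs k" using v mem_image by blast
    moreover have "inv p v \<notin> S" using v in_S[of "inv p v"] permutes_inverses(1)[OF perm, of v] by simp
    ultimately show "(p \<circ> \<pi> \<circ> inv p) v \<in> p ` Vs (k - 1)"
      using \<pi>_layer \<open>k \<in> {1..t}\<close> by auto
  next
    fix k a b assume k: "k \<in> {1..t}"
      and a: "a \<in> p ` Vs k - p ` Vs (k - 1)" and b: "b \<in> p ` Vs k - p ` Vs (k - 1)"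
      and "(p \<circ> \<pi> \<circ> inv p) a = (p \<circ> \<pi> \<circ> inv p) b"
    then have "\<pi> (inv p a) = \<pi> (inv p b)" using permutes_inj[OF perm] by (simp add: inj_eq)
    moreover have "inv p a \<in> Vs k - Vs (k - 1)" and "inv p b \<in> Vs k - Vs (k - 1)"
      using a b by (simp_all add: mem_image)
    ultimately have "inv p a = inv p b" using \<pi>_inj k by blast
    then show "a = b" by (metis permutes_inverses(1)[OF perm])
  qed
qed

lemma children_permute:
  assumes perm: "p permutes V - S"
  shows "children V S (p \<circ> \<pi> \<circ> inv p) v = p ` children V S \<pi> (inv p v)"
proof -
  have "w \<in> children V S (p \<circ> \<pi> \<circ> inv p) v \<longleftrightarrow> inv p w \<in> children V S \<pi> (inv p v)" for w
    unfolding children_def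
    using permutes_in_image[OF permutes_inv[OF perm]] permutes_inverses[OF perm] by auto
  then show ?thesis using permutes_image_mem_iff[OF perm] by blast
qed

lemma valid_layering_redirect:
  assumes lay: "valid_layering V S t W \<rho>" and "u \<in> V"
    and M: "M \<subseteq> children V S \<rho> j"
    and u_with_j: "\<forall>m\<le>t. j \<in> W m \<longrightarrow> u \<in> W m"
    and apart: "\<forall>w\<in>M. \<forall>y\<in>children V S \<rho> u. \<forall>m\<in>{1..t}. w \<in> W m - W (m - 1) \<longrightarrow> y \<notin> W m - W (m - 1)"
  shows "valid_layering V S t W (\<lambda>w. if w \<in> M then u else \<rho> w)"
proof -
  have W0: "W 0 = S" and chain: "\<forall>k<t. W k \<subseteq> W (Suc k)" and Wt: "W t \<subseteq> V"
    and \<rho>_into_V: "\<forall>v\<in>V - S. \<rho> v \<in> V"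
    and \<rho>_layer: "\<forall>k\<in>{1..t}. \<forall>v\<in>W k - S. \<rho> v \<in> W (k - 1)"
    and \<rho>_inj: "\<forall>k\<in>{1..t}. \<forall>a\<in>W k - W (k - 1). \<forall>b\<in>W k - W (k - 1). \<rho> a = \<rho> b \<longrightarrow> a = b"
    using lay unfolding valid_layering_def by blast+
  have \<rho>_M: "\<rho> w = j" if "w \<in> M" for w
    using M that unfolding children_def by blast
  have new_nonsrc: "x \<in> V - S" if "m \<in> {1..t}" and "x \<in> W m - W (m - 1)" for m x
  proof -
    have "m - 1 \<le> t" and "m \<le> t" using that(1) by auto
    then have "W 0 \<subseteq> W (m - 1)" and "W m \<subseteq> W t"
      using chain_subset[OF chain le0] chain_subset[OF chain _ order.refl] by blast+
    then show ?thesis using that(2) W0 Wt by blast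
  qed
  show ?thesis
    unfolding valid_layering_def
  proof (intro conjI ballI allI impI)
    show "W 0 = S" "W t \<subseteq> V" by (fact W0, fact Wt)
    show "W k \<subseteq> W (Suc k)" if "k < t" for k using chain that by blast
  next
    fix v assume "v \<in> V - S"
    then show "(if v \<in> M then u else \<rho> v) \<in> V" using \<rho>_into_V \<open>u \<in> V\<close> by simp
  next
    fix k v assume k: "k \<in> {1..t}" and v: "v \<in> W k - S"
    have "u \<in> W (k - 1)" if "v \<in> M"
      using \<rho>_layer k v \<rho>_M[OF that] u_with_j by auto
    then show "(if v \<in> M then u else \<rho> v) \<in> W (k - 1)"
      using \<rho>_layer k v by auto
  next
    fix k a b assume k: "k \<in> {1..t}" and a: "a \<in> W k - W (k - 1)" and b: "b \<in> W k - W (k - 1)"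
      and same: "(if a \<in> M then u else \<rho> a) = (if b \<in> M then u else \<rho> b)"
    have mixed: False if "x \<in> M" "y \<notin> M" "x \<in> W k - W (k - 1)" "y \<in> W k - W (k - 1)" "\<rho> y = u" for x y
      using apart that k new_nonsrc[OF k that(4)] unfolding children_def by blast
    show "a = b"
    proof (cases "a \<in> M \<longleftrightarrow> b \<in> M")
      case True
      then have "\<rho> a = \<rho> b" using same \<rho>_M by (cases "a \<in> M") auto
      then show ?thesis using \<rho>_inj k a b by blast
    next
      case False
      then show ?thesis using mixed[of a b] mixed[of b a] a b same by (cases "a \<in> M") auto
    qed
  qed
qed

lemma within_capacity_redirect:
  assumes "finite V" and u: "u \<in> V - S" and j: "j \<in> V - S" and "u \<noteq> j"
    and M: "M \<subseteq> children V S \<rho> j" and card_M: "card M = card (children V S \<rho> j) - (c j - 1)"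
    and cap_others: "\<forall>v\<in>V - {u, j}. card (children V S \<rho> v) + (if v \<in> V - S then 1 else 0) \<le> c v"
    and load_u: "card (children V S \<rho> u) + 1 \<le> c j"
    and load_j: "card (children V S \<rho> j) + 1 \<le> c u"
    and "c j \<le> c u"
  shows "within_capacity c V S (\<lambda>w. if w \<in> M then u else \<rho> w)"
  unfolding within_capacity_def
proof
  fix v assume "v \<in> V"
  let ?ch = "children V S \<rho>" and ?ch' = "children V S (\<lambda>w. if w \<in> M then u else \<rho> w)"
  have finite_ch: "finite (?ch x)" for x
    using \<open>finite V\<close> unfolding children_def by simp
  have "finite M" using M finite_ch by (rule finite_subset)
  have "?ch' u = ?ch u \<union> M" and "?ch u \<inter> M = {}"
    using M \<open>u \<noteq> j\<close> unfolding children_def by auto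
  then have card_u: "card (?ch' u) = card (?ch u) + card M"
    using finite_ch \<open>finite M\<close> by (simp add: card_Un_disjoint)
  have "?ch' j = ?ch j - M"
    using M \<open>u \<noteq> j\<close> unfolding children_def by auto
  then have card_j: "card (?ch' j) = card (?ch j) - card M"
    using M \<open>finite M\<close> by (simp add: card_Diff_subset)
  have ch_other: "?ch' x = ?ch x" if "x \<noteq> u" "x \<noteq> j" for x
    using M that unfolding children_def by auto
  consider "v = u" | "v = j" | "v \<noteq> u" "v \<noteq> j" by blast
  then show "card (?ch' v) + (if v \<in> V - S then 1 else 0) \<le> c v"
  proof cases
    case 1
    then show ?thesis using u card_u card_M load_u load_j \<open>c j \<le> c u\<close> by simp
  next
    case 2
    then show ?thesis using j card_j card_M load_u by simp
  next
    case 3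
    then show ?thesis using cap_others \<open>v \<in> V\<close> ch_other by simp
  qed
qed

lemma rebalance_children:
  assumes lay: "valid_layering V S t W \<rho>" and "finite V"
    and u: "u \<in> V - S" and j: "j \<in> V - S" and "u \<noteq> j"
    and u_with_j: "\<forall>m\<le>t. j \<in> W m \<longrightarrow> u \<in> W m"
    and cap_others: "\<forall>v\<in>V - {u, j}. card (children V S \<rho> v) + (if v \<in> V - S then 1 else 0) \<le> c v"
    and load_u: "card (children V S \<rho> u) + 1 \<le> c j"
    and load_j: "card (children V S \<rho> j) + 1 \<le> c u"
    and "c j \<le> c u"
  shows "\<exists>\<rho>'. valid_layering V S t W \<rho>' \<and> within_capacity c V S \<rho>'"
proof -
  have chain: "\<forall>k<t. W k \<subseteq> W (Suc k)"
    and \<rho>_inj: "\<forall>k\<in>{1..t}. \<forall>a\<in>W k - W (k - 1). \<forall>b\<in>W k - W (k - 1). \<rho> a = \<rho> b \<longrightarrow> a = b"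
    using lay unfolding valid_layering_def by blast+
  define enters where "enters x m \<longleftrightarrow> m \<in> {1..t} \<and> x \<in> W m - W (m - 1)" for x m
  let ?ch = "children V S \<rho>"
  have finite_ch: "finite (?ch v)" for v
    using \<open>finite V\<close> unfolding children_def by simp
  \<comment> \<open>The surplus children of j must avoid the entry layers of the children of u.\<close>
  define B where "B = {w \<in> ?ch j. \<exists>y\<in>?ch u. \<exists>m. enters w m \<and> enters y m}"
  have B_sub: "B \<subseteq> ?ch j" unfolding B_def by blast
  have "card B \<le> card (?ch u)"
    unfolding B_def
  proof (rule card_sharing_label_le[OF finite_ch])
    show "m = m'" if "enters x m" "enters x m'" for x m m'
      using entry_layer_unique[OF chain] that unfolding enters_def by blast
    show "a = b" if "a \<in> ?ch j" "b \<in> ?ch j" "enters a m" "enters b m" for a b m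
      using \<rho>_inj that unfolding enters_def children_def by auto
  qed
  moreover have "card (?ch j - B) = card (?ch j) - card B"
    using B_sub by (simp add: card_Diff_subset finite_subset[OF B_sub finite_ch])
  ultimately have "card (?ch j) - (c j - 1) \<le> card (?ch j - B)"
    using load_u by linarith
  then obtain M where M: "M \<subseteq> ?ch j - B" and card_M: "card M = card (?ch j) - (c j - 1)"
    by (meson obtain_subset_with_card_n)
  have "valid_layering V S t W (\<lambda>w. if w \<in> M then u else \<rho> w)"
  proof (rule valid_layering_redirect[OF lay _ _ u_with_j])
    show "u \<in> V" "M \<subseteq> ?ch j" using u M by auto
    show "\<forall>w\<in>M. \<forall>y\<in>?ch u. \<forall>m\<in>{1..t}. w \<in> W m - W (m - 1) \<longrightarrow> y \<notin> W m - W (m - 1)"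
      using M unfolding B_def enters_def by blast
  qed
  moreover have "within_capacity c V S (\<lambda>w. if w \<in> M then u else \<rho> w)"
    using M within_capacity_redirect[OF \<open>finite V\<close> u j \<open>u \<noteq> j\<close> _ card_M cap_others load_u load_j \<open>c j \<le> c u\<close>]
    by blast
  ultimately show ?thesis by blast
qed

definition layer_index_sum :: "nat \<Rightarrow> (nat \<Rightarrow> nat set) \<Rightarrow> nat" where
  "layer_index_sum t Vs = (\<Sum>i\<le>t. \<Sum>(Vs i))"

lemma layer_index_sum_transpose_less:
  fixes u j :: nat
  assumes "u < j" and finite: "\<And>i. i \<le> t \<Longrightarrow> finite (Vs i)"
    and j_with_u: "\<And>i. u \<in> Vs i \<Longrightarrow> i \<le> t \<Longrightarrow> j \<in> Vs i"
    and "m \<le> t" and "j \<in> Vs m" and "u \<notin> Vs m"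
  shows "layer_index_sum t (\<lambda>i. transpose u j ` Vs i) < layer_index_sum t Vs"
  unfolding layer_index_sum_def
proof (rule sum_strict_mono_ex1)
  show "\<forall>i\<in>{..t}. \<Sum>(transpose u j ` Vs i) \<le> \<Sum>(Vs i)"
    using finite j_with_u \<open>u < j\<close> by (auto intro: sum_transpose_image_le)
  show "\<exists>i\<in>{..t}. \<Sum>(transpose u j ` Vs i) < \<Sum>(Vs i)"
    using finite assms(1,4-6) by (intro bexI[of _ m] sum_transpose_image_less) auto
qed simp

lemma valid_layering_transpose:
  assumes lay: "valid_layering V S t Vs \<pi>" and cap: "within_capacity c V S \<pi>" and "finite V"
    and u: "u \<in> V - S" and j: "j \<in> V - S" and "u \<noteq> j" and "c j \<le> c u"
    and j_with_u: "\<forall>i\<le>t. u \<in> Vs i \<longrightarrow> j \<in> Vs i"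
  shows "\<exists>\<pi>'. valid_layering V S t (\<lambda>i. transpose u j ` Vs i) \<pi>' \<and> within_capacity c V S \<pi>'"
proof -
  define p where "p = transpose u j"
  have perm: "p permutes V - S" unfolding p_def using u j by (rule permutes_swap_id)
  define \<rho> where "\<rho> = p \<circ> \<pi> \<circ> inv p"
  have card_ch: "card (children V S \<rho> v) = card (children V S \<pi> (p v))" for v
    unfolding \<rho>_def children_permute[OF perm] by (simp add: p_def card_image)
  have cap_\<pi>: "card (children V S \<pi> v) + (if v \<in> V - S then 1 else 0) \<le> c v" if "v \<in> V" for v
    using cap that unfolding within_capacity_def by blast
  have "valid_layering V S t (\<lambda>i. p ` Vs i) \<rho>"
    unfolding \<rho>_def using valid_layering_permute[OF lay perm] .
  moreover have "\<forall>m\<le>t. j \<in> p ` Vs m \<longrightarrow> u \<in> p ` Vs m"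
    using j_with_u unfolding p_def by (auto simp: in_transpose_image_iff)
  moreover have "\<forall>v\<in>V - {u, j}. card (children V S \<rho> v) + (if v \<in> V - S then 1 else 0) \<le> c v"
    using cap_\<pi> unfolding card_ch p_def by auto
  moreover have "card (children V S \<rho> u) + 1 \<le> c j" and "card (children V S \<rho> j) + 1 \<le> c u"
    using cap_\<pi>[of u] cap_\<pi>[of j] u j unfolding card_ch p_def by auto
  ultimately show ?thesis
    using rebalance_children[OF _ \<open>finite V\<close> u j \<open>u \<noteq> j\<close>] \<open>c j \<le> c u\<close> unfolding p_def by blast
qed

lemma valid_tuple_remove_inversion:
  assumes valid: "valid_tuple n E \<sigma> t Vs \<pi>"
    and deg_antimono: "\<forall>i j. \<sigma> < i \<and> i \<le> j \<and> j \<le> n \<longrightarrow> deg E j \<le> deg E i"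
    and k: "k \<in> {1..t}" and u: "u \<in> Vs k - Vs (k - 1)" and j: "j \<in> Vs (k - 1)" and "u < j"
  shows "\<exists>Vs' \<pi>'. valid_tuple n E \<sigma> t Vs' \<pi>' \<and> card (Vs' t) = card (Vs t) \<and>
           layer_index_sum t Vs' < layer_index_sum t Vs"
proof -
  define V S where "V = {1..n}" and "S = {1..\<sigma>}"
  have lay: "valid_layering V S t Vs \<pi>" and cap: "within_capacity (deg E) V S \<pi>"
    using valid unfolding valid_tuple_iff V_def S_def by blast+
  have V0: "Vs 0 = S" and chain: "\<forall>k<t. Vs k \<subseteq> Vs (Suc k)" and Vt: "Vs t \<subseteq> V"
    using lay unfolding valid_layering_def by blast+
  have in_V: "Vs i \<subseteq> V" if "i \<le> t" for i
    using chain_subset[OF chain that order.refl] Vt by blast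
  have "k - 1 \<le> t" and "k \<le> t" using k by auto
  have "S \<subseteq> Vs (k - 1)" using V0 chain_subset[OF chain le0 \<open>k - 1 \<le> t\<close>] by simp
  then have u_nonsrc: "u \<in> V - S" using u in_V[OF \<open>k \<le> t\<close>] by auto
  have "j \<notin> S" using u_nonsrc \<open>u < j\<close> unfolding S_def V_def by auto
  then have j_nonsrc: "j \<in> V - S" using j in_V[OF \<open>k - 1 \<le> t\<close>] by auto
  have j_with_u: "j \<in> Vs i" if "u \<in> Vs i" "i \<le> t" for i
  proof -
    have "\<not> i \<le> k - 1" using chain_subset[OF chain _ ] u that k by fastforce
    then show ?thesis using chain_subset[OF chain _ \<open>i \<le> t\<close>, of "k - 1"] j by auto
  qed
  define W where "W i = transpose u j ` Vs i" for i
  have "deg E j \<le> deg E u"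
    using deg_antimono u_nonsrc j_nonsrc \<open>u < j\<close> unfolding V_def S_def by auto
  then obtain \<pi>' where "valid_layering V S t W \<pi>'" and "within_capacity (deg E) V S \<pi>'"
    using valid_layering_transpose[OF lay cap _ u_nonsrc j_nonsrc] j_with_u \<open>u < j\<close>
    unfolding W_def V_def by auto
  then have "valid_tuple n E \<sigma> t W \<pi>'" unfolding valid_tuple_iff V_def S_def by blast
  moreover have "card (W t) = card (Vs t)"
    unfolding W_def by (simp add: card_image)
  moreover have "layer_index_sum t W < layer_index_sum t Vs"
  proof -
    have "finite (Vs i)" if "i \<le> t" for i
      using in_V[OF that] unfolding V_def by (rule finite_subset) simp
    then show ?thesis
      unfolding W_def using j_with_u u j \<open>k - 1 \<le> t\<close> \<open>u < j\<close>
      by (intro layer_index_sum_transpose_less) auto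
  qed
  ultimately show ?thesis by blast
qed

theorem lemma1:
  fixes n \<sigma> t :: nat and E :: "nat \<Rightarrow> nat \<Rightarrow> bool"
  assumes "simple_graph n E"
    and "connected_graph n E"
    and "1 \<le> \<sigma>" and "\<sigma> \<le> n"
    and "\<forall>i j. \<sigma> < i \<and> i \<le> j \<and> j \<le> n \<longrightarrow> deg E j \<le> deg E i"
  shows "\<exists>Vs \<pi>. valid_tuple n E \<sigma> t Vs \<pi> \<and>
           (\<forall>Vs' \<pi>'. valid_tuple n E \<sigma> t Vs' \<pi>' \<longrightarrow> card (Vs' t) \<le> card (Vs t)) \<and>
           (\<forall>k\<in>{1..t}. \<forall>i\<in>Vs k - Vs (k - 1). \<forall>j\<in>Vs (k - 1). j < i)"
proof -
  define valid where "valid q \<longleftrightarrow> valid_tuple n E \<sigma> t (fst q) (snd q)" for q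
  obtain Vs0 \<pi>0 where "valid_tuple n E \<sigma> t Vs0 \<pi>0" using valid_tuple_exists[OF assms(1-4)] by blast
  then have "valid (Vs0, \<pi>0)" unfolding valid_def by simp
  moreover have "card (fst q t) < Suc n" if "valid q" for q
    using that card_mono[of "{1..n}" "fst q t"] unfolding valid_def valid_tuple_iff valid_layering_def by auto
  ultimately obtain qmax where "valid qmax" and qmax: "\<forall>q. valid q \<longrightarrow> card (fst q t) \<le> card (fst qmax t)"
    using ex_has_greatest_nat[of valid "(Vs0, \<pi>0)" "\<lambda>q. card (fst q t)"] by blast
  define optimal where "optimal q \<longleftrightarrow> valid q \<and> card (fst q t) = card (fst qmax t)" for q
  obtain Vs \<pi> where opt: "optimal (Vs, \<pi>)"
    and least: "\<forall>q. optimal q \<longrightarrow> layer_index_sum t Vs \<le> layer_index_sum t (fst q)"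
    using ex_has_least_nat[of optimal qmax "\<lambda>q. layer_index_sum t (fst q)"] \<open>valid qmax\<close>
    unfolding optimal_def by (metis prod.collapse)
  have "j < i" if "k \<in> {1..t}" "i \<in> Vs k - Vs (k - 1)" "j \<in> Vs (k - 1)" for k i j
  proof (rule ccontr)
    assume "\<not> j < i"
    with that have "i < j" by (cases "i = j") auto
    with valid_tuple_remove_inversion[OF _ assms(5) that] opt least show False
      unfolding optimal_def valid_def by (metis fst_conv snd_conv not_le)
  qed
  then show ?thesis
    using opt qmax unfolding optimal_def valid_def by (intro exI[of _ Vs] exI[of _ \<pi>]) auto
qed

end
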